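(* Let $1/2<\alpha<1$, $\omega^\alpha_+(x)=\frac{1}{|x|\,|\log|x||^\alpha}\chi_{B^+(0;1/3)}(x)$ on $\mathbb{R}^2$, and $u^\alpha_+=K\ast\omega^\alpha_+$. Then $u^\alpha_+$ is unbounded. If moreover $1/2<\alpha\le2/3$, then $u^\alpha_+|\omega^\alpha_+|^2$ is not locally integrable.
   Context: $B^+(0;1/3)=\{x\in\mathbb{R}^2:|x|<1/3,\ x_2>0\}$; $\chi_E$ is the characteristic function of $E$. $K(x)=\frac{x^\perp}{2\pi|x|^2}$, $(x_1,x_2)^\perp=(-x_2,x_1)$, is the Biot–Savart kernel. The paper defines $\omega^\alpha_+$ under the standing assumption $1/2<\alpha<1$. *)

theory Defs
  imports "HOL-Analysis.Analysis"
begin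

definition perp :: "real^2 \<Rightarrow> real^2" where
  "perp x = vector [- (x$2), x$1]"

definition BS_kernel :: "real^2 \<Rightarrow> real^2" where
  "BS_kernel x = (1 / (2 * pi * (norm x)\<^sup>2)) *\<^sub>R perp x"

definition half_ball :: "(real^2) set" where
  "half_ball = {x. norm x < 1/3 \<and> x$2 > 0}"

definition omega_plus :: "real \<Rightarrow> real^2 \<Rightarrow> real" where
  "omega_plus \<alpha> x = indicator half_ball x * (1 / (norm x * \<bar>ln (norm x)\<bar> powr \<alpha>))"

definition u_plus :: "real \<Rightarrow> real^2 \<Rightarrow> real^2" where
  "u_plus \<alpha> x = (LINT y|lborel. omega_plus \<alpha> y *\<^sub>R BS_kernel (x - y))"

end

theory Submission
  imports Defs
begin

(*
  On the dyadic box Q_k = (0, 2^-k) x (2^-k, 2^(1-k)) the vorticity is of size 2^k / k^alpha.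
  For x in Q_k, the horizontal velocity 2 pi u_1(x) = int omega(y) (y_2 - x_2) / |x - y|^2 dy
  receives a contribution of order j^-alpha from each box Q_j with 3 <= j <= k - 2, all of which
  lie above x, while the negative part of the integrand (y_2 < x_2) has integral bounded
  independently of k. Hence u_1 >= c k^(1 - alpha) on Q_k, which is unbounded since alpha < 1.
  If moreover alpha <= 2/3, then omega^2 |u| >= c 4^k k^(1 - 3 alpha) >= c 4^k / k on Q_k, and
  since Q_k has area 4^-k the integral of omega^2 |u| over the union of the Q_k dominates the
  harmonic series. The two singular integrals behind the uniform bound (of 1/|y| over a disc
  and of |y_1|^-3 over a horizontal strip) are estimated by covering with dyadic squares.
*)

section \<open>Dyadic coverings in the plane\<close>

lemma norm_vec2_power2: "(norm (x::real^2))\<^sup>2 = (x$1)\<^sup>2 + (x$2)\<^sup>2"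
  by (simp add: norm_vec_def L2_set_def sum_2)

lemma power2_two_power: "((2::real)^k)\<^sup>2 = 4^k"
  by (simp add: power2_eq_square flip: power_mult_distrib)

lemma mem_box_vector2:
  "(y::real^2) \<in> box (vector [a1, a2]) (vector [b1, b2]) \<longleftrightarrow> a1 < y$1 \<and> y$1 < b1 \<and> a2 < y$2 \<and> y$2 < b2"
  by (simp add: mem_box_cart forall_2)

lemma emeasure_box_vector2:
  assumes "a1 \<le> b1" "a2 \<le> b2"
  shows "emeasure lborel (box (vector [a1, a2]) (vector [b1, b2]) :: (real^2) set)
           = ennreal ((b1 - a1) * (b2 - a2))"
proof -
  have basis: "(Basis :: (real^2) set) = {axis 1 1, axis 2 1}" by (auto simp: Basis_vec_def UNIV_2)
  have "axis (1::2) (1::real) \<noteq> axis 2 1" by (simp add: axis_eq_axis)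
  then show ?thesis
    using assms by (subst emeasure_lborel_box_eq) (simp add: basis inner_axis ennreal_mult)
qed

lemma real_dyadic_bracket:
  fixes t :: real
  assumes "1 < t"
  obtains m :: nat where "2^m < t" "t \<le> 2^Suc m"
proof -
  obtain n where "t < 2^n" using real_arch_pow[of 2 t] by auto
  define k where "k = (LEAST n. t \<le> (2::real)^n)"
  have upper: "t \<le> 2^k" unfolding k_def by (rule LeastI[of _ n]) (use \<open>t < 2^n\<close> in auto)
  have "k \<noteq> 0" using upper assms by (cases k) auto
  moreover have "\<not> t \<le> 2^(k-1)" unfolding k_def
    by (rule not_less_Least) (use \<open>k \<noteq> 0\<close> k_def in auto)
  ultimately show ?thesis using upper that[of "k-1"] by simp
qed

lemma suminf_ennreal_geometric:
  fixes a q :: real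
  assumes "0 \<le> a" "0 \<le> q" "q < 1"
  shows "(\<Sum>m. ennreal (a * q^m)) = ennreal (a / (1 - q))"
proof (rule suminf_ennreal_eq)
  show "(\<lambda>m. a * q^m) sums (a / (1 - q))"
    using sums_mult[OF geometric_sums[of q], of a] assms by (simp add: field_simps)
qed (use assms in simp)

lemma nn_integral_le_suminf_cover:
  fixes f :: "'a \<Rightarrow> ennreal"
  assumes sets: "\<And>m. S m \<in> sets M" and measure: "\<And>m. emeasure M (S m) = ennreal (s m)"
    and nonneg: "\<And>m. 0 \<le> c m" "\<And>m. 0 \<le> s m"
    and cover: "\<And>y. f y = 0 \<or> (\<exists>m. y \<in> S m \<and> f y \<le> ennreal (c m))"
  shows "(\<integral>\<^sup>+ y. f y \<partial>M) \<le> (\<Sum>m. ennreal (c m * s m))"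
proof -
  have "f y \<le> (\<Sum>m. ennreal (c m) * indicator (S m) y)" for y
  proof -
    define g where "g = (\<lambda>m. ennreal (c m) * indicator (S m) y)"
    from cover[of y] show ?thesis
    proof
      assume "\<exists>m. y \<in> S m \<and> f y \<le> ennreal (c m)"
      then obtain m where "y \<in> S m" "f y \<le> ennreal (c m)" by blast
      then have "f y \<le> g m" by (simp add: g_def)
      also have "g m \<le> suminf g" using sum_le_suminf[of g "{m}"] by simp
      finally show ?thesis by (simp only: g_def)
    qed simp
  qed
  then have "(\<integral>\<^sup>+ y. f y \<partial>M) \<le> (\<integral>\<^sup>+ y. (\<Sum>m. ennreal (c m) * indicator (S m) y) \<partial>M)"
    by (intro nn_integral_mono)
  also have "\<dots> = (\<Sum>m. ennreal (c m * s m))"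
    using sets nonneg by (simp add: nn_integral_suminf nn_integral_cmult_indicator measure ennreal_mult)
  finally show ?thesis .
qed

lemma nn_integral_inverse_dist_ball_le:
  fixes c :: "real^2"
  assumes R: "0 < R"
  shows "(\<integral>\<^sup>+ y. ennreal (indicator (ball c R) y / norm (y - c)) \<partial>lborel) \<le> ennreal (16 * R)"
proof -
  define S :: "nat \<Rightarrow> (real^2) set"
    where "S m = box (vector [c$1 - R/2^m, c$2 - R/2^m]) (vector [c$1 + R/2^m, c$2 + R/2^m])" for m
  have measure: "emeasure lborel (S m) = ennreal ((2 * R / 2^m)\<^sup>2)" for m
    unfolding S_def using R by (subst emeasure_box_vector2) (simp_all add: power2_eq_square)
  have cover: "ennreal (indicator (ball c R) y / norm (y - c)) = 0
      \<or> (\<exists>m. y \<in> S m \<and> ennreal (indicator (ball c R) y / norm (y - c)) \<le> ennreal (2^Suc m / R))"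
    for y
  proof (cases "y \<in> ball c R \<and> y \<noteq> c")
    case True
    then have r: "0 < norm (y - c)" "norm (y - c) < R"
      by (auto simp: dist_norm norm_minus_commute)
    then have "1 < R / norm (y - c)" by simp
    then obtain m :: nat where m: "2^m < R / norm (y - c)" "R / norm (y - c) \<le> 2^Suc m"
      by (rule real_dyadic_bracket)
    have "norm (y - c) < R/2^m" using m(1) r by (simp add: field_simps)
    then have "\<bar>y$i - c$i\<bar> < R/2^m" for i
      using component_le_norm_cart[of "y - c" i] by simp
    from this[of 1] this[of 2] have "y \<in> S m" by (simp add: S_def mem_box_vector2 abs_less_iff)
    moreover have "1 / norm (y - c) \<le> 2^Suc m / R" using m(2) r R by (simp add: field_simps)
    ultimately show ?thesis using True by (intro disjI2 exI[of _ m]) (simp add: ennreal_leI)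
  qed auto
  have "(\<integral>\<^sup>+ y. ennreal (indicator (ball c R) y / norm (y - c)) \<partial>lborel)
      \<le> (\<Sum>m. ennreal (2^Suc m / R * (2 * R / 2^m)\<^sup>2))"
    using R by (intro nn_integral_le_suminf_cover[OF _ measure _ _ cover]) (simp_all add: S_def)
  also have "\<dots> = (\<Sum>m. ennreal (8 * R * (1/2)^m))"
    using R by (simp add: power2_eq_square power_one_over field_simps)
  also have "\<dots> = ennreal (16 * R)"
    using R by (subst suminf_ennreal_geometric) auto
  finally show ?thesis .
qed

lemma nn_integral_strip_inverse_cube_le:
  assumes a: "0 < a" and b: "0 \<le> b"
  shows "(\<integral>\<^sup>+ y. ennreal (indicator {y::real^2. a < \<bar>y$1\<bar> \<and> 0 < y$2 \<and> y$2 < b} y / \<bar>y$1\<bar>^3) \<partial>lborel)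
           \<le> ennreal (32 * b / (3 * a\<^sup>2))"
proof -
  define T where "T = {y::real^2. a < \<bar>y$1\<bar> \<and> 0 < y$2 \<and> y$2 < b}"
  define S :: "nat \<Rightarrow> (real^2) set"
    where "S m = box (vector [- 4 * a * 2^m, 0]) (vector [4 * a * 2^m, b])" for m
  have measure: "emeasure lborel (S m) = ennreal (8 * a * 2^m * b)" for m
    unfolding S_def using a b by (subst emeasure_box_vector2) simp_all
  have cover: "ennreal (indicator T y / \<bar>y$1\<bar>^3) = 0
      \<or> (\<exists>m. y \<in> S m \<and> ennreal (indicator T y / \<bar>y$1\<bar>^3) \<le> ennreal (1 / (a * 2^m)^3))"
    for y
  proof (cases "y \<in> T")
    case True
    then have y: "a < \<bar>y$1\<bar>" "0 < y$2" "y$2 < b" by (auto simp: T_def)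
    then have "1 < \<bar>y$1\<bar> / a" using a by simp
    then obtain m :: nat where m: "2^m < \<bar>y$1\<bar> / a" "\<bar>y$1\<bar> / a \<le> 2^Suc m"
      by (rule real_dyadic_bracket)
    have lower: "a * 2^m < \<bar>y$1\<bar>" using m(1) a by (simp add: field_simps)
    have "\<bar>y$1\<bar> \<le> 2 * a * 2^m" using m(2) a by (simp add: field_simps)
    also have "\<dots> < 4 * a * 2^m" using a by simp
    finally have "y \<in> S m" using y by (auto simp: S_def mem_box_vector2 abs_less_iff)
    moreover have "1 / \<bar>y$1\<bar>^3 \<le> 1 / (a * 2^m)^3"
    proof -
      have "0 < a * 2^m" using a by simp
      then show ?thesis using lower by (simp add: frac_le power_mono)
    qed
    ultimately show ?thesis using True by (intro disjI2 exI[of _ m]) (simp add: ennreal_leI)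
  qed simp
  have "(\<integral>\<^sup>+ y. ennreal (indicator T y / \<bar>y$1\<bar>^3) \<partial>lborel)
      \<le> (\<Sum>m. ennreal (1 / (a * 2^m)^3 * (8 * a * 2^m * b)))"
    using a b by (intro nn_integral_le_suminf_cover[OF _ measure _ _ cover]) (simp_all add: S_def)
  also have "\<dots> = (\<Sum>m. ennreal (8 * b / a\<^sup>2 * (1/4)^m))"
    using a by (simp add: power2_eq_square power3_eq_cube power_one_over field_simps flip: power2_two_power)
  also have "\<dots> = ennreal (32 * b / (3 * a\<^sup>2))"
    using a b by (subst suminf_ennreal_geometric) auto
  finally show ?thesis unfolding T_def .
qed

lemma inverse_mult_le_inverse_add:
  fixes a b n :: real
  assumes "0 < a" "0 < b" "0 < n" "n \<le> a + b"
  shows "1 / (a * b) \<le> (1/a + 1/b) / n"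
proof -
  have "1 / (a * b) = n / (a * b * n)" using assms by simp
  also have "\<dots> \<le> (a + b) / (a * b * n)" using assms by (intro divide_right_mono) auto
  also have "\<dots> = (1/a + 1/b) / n" using assms by (simp add: field_simps)
  finally show ?thesis .
qed

lemma indicator_ball_inverse_norm_mult_le:
  fixes x y :: "real^2"
  assumes x: "x \<noteq> 0"
  shows "indicator (ball 0 R) y / (norm y * norm (x - y))
           \<le> (indicator (ball 0 R) y / norm (y - 0) + indicator (ball x (R + norm x)) y / norm (y - x)) / norm x"
proof (cases "y \<in> ball 0 R \<and> y \<noteq> 0 \<and> y \<noteq> x")
  case False
  then have "indicator (ball 0 R) y / (norm y * norm (x - y)) = 0" by auto
  moreover have "0 \<le> (indicator (ball 0 R) y / norm (y - 0) + indicator (ball x (R + norm x)) y / norm (y - x)) / norm x"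
    by simp
  ultimately show ?thesis by linarith
next
  case True
  then have "y \<in> ball x (R + norm x)"
    using norm_triangle_ineq4[of y x] by (simp add: dist_norm norm_minus_commute)
  moreover have "1 / (norm y * norm (x - y)) \<le> (1 / norm y + 1 / norm (x - y)) / norm x"
    using True x norm_triangle_ineq[of y "x - y"] by (intro inverse_mult_le_inverse_add) auto
  ultimately show ?thesis using True by (simp add: norm_minus_commute)
qed

lemma nn_integral_inverse_norm_mult_le:
  fixes x :: "real^2"
  assumes R: "0 < R" and x: "x \<noteq> 0"
  shows "(\<integral>\<^sup>+ y. ennreal (indicator (ball 0 R) y / (norm y * norm (x - y))) \<partial>lborel)
           \<le> ennreal (16 * (2 * R + norm x) / norm x)"
proof -
  define A where "A y = indicator (ball 0 R) y / norm (y - 0)" for y :: "real^2"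
  define B where "B y = indicator (ball x (R + norm x)) y / norm (y - x)" for y :: "real^2"
  have [measurable]: "(\<lambda>y. ennreal (A y)) \<in> borel_measurable lborel"
    unfolding A_def by (measurable; simp add: borel_open)
  have [measurable]: "(\<lambda>y. ennreal (B y)) \<in> borel_measurable lborel"
    unfolding B_def by (measurable; simp add: borel_open)
  have "(\<integral>\<^sup>+ y. ennreal (indicator (ball 0 R) y / (norm y * norm (x - y))) \<partial>lborel)
      \<le> (\<integral>\<^sup>+ y. ennreal (1 / norm x) * (ennreal (A y) + ennreal (B y)) \<partial>lborel)"
  proof (rule nn_integral_mono)
    fix y
    have "0 \<le> A y" "0 \<le> B y" by (simp_all add: A_def B_def)
    then show "ennreal (indicator (ball 0 R) y / (norm y * norm (x - y)))
        \<le> ennreal (1 / norm x) * (ennreal (A y) + ennreal (B y))"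
      using indicator_ball_inverse_norm_mult_le[OF x, of R y]
      by (simp add: A_def B_def ennreal_leI flip: ennreal_plus ennreal_mult)
  qed
  also have "\<dots> = ennreal (1 / norm x) * ((\<integral>\<^sup>+ y. A y \<partial>lborel) + (\<integral>\<^sup>+ y. B y \<partial>lborel))"
    by (simp add: nn_integral_cmult nn_integral_add)
  also have "\<dots> \<le> ennreal (1 / norm x) * (ennreal (16 * R) + ennreal (16 * (R + norm x)))"
    unfolding A_def B_def using R
    by (intro mult_left_mono add_mono nn_integral_inverse_dist_ball_le) (auto intro: add_pos_nonneg)
  also have "\<dots> = ennreal (16 * (2 * R + norm x) / norm x)"
    using R by (simp add: field_simps flip: ennreal_plus ennreal_mult)
  finally show ?thesis .
qed

section \<open>The vorticity and the Biot--Savart integral\<close>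

lemma omega_plus_nonneg: "0 \<le> omega_plus \<alpha> y"
  by (simp add: omega_plus_def)

lemma omega_plus_eq_0: "y \<notin> half_ball \<Longrightarrow> omega_plus \<alpha> y = 0"
  by (simp add: omega_plus_def)

lemma norm_pos_half_ball: "y \<in> half_ball \<Longrightarrow> 0 < norm y"
  using component_le_norm_cart[of y 2] by (auto simp: half_ball_def)

lemma omega_plus_le:
  assumes "0 \<le> \<alpha>"
  shows "omega_plus \<alpha> y \<le> indicator (ball 0 (1/3)) y / norm y"
proof (cases "y \<in> half_ball")
  case False
  then show ?thesis by (simp add: omega_plus_eq_0)
next
  case True
  then have y: "norm y < 1/3" "0 < norm y" by (auto simp: half_ball_def norm_pos_half_ball)
  have "1 \<le> ln (3::real)" using exp_le by (subst ln_ge_iff) auto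
  moreover have "ln (norm y) < ln (1/3)" using y by simp
  ultimately have "1 \<le> \<bar>ln (norm y)\<bar>" by (simp add: ln_div)
  then have "1 \<le> \<bar>ln (norm y)\<bar> powr \<alpha>" using assms by (intro ge_one_powr_ge_zero) auto
  then have "1 / (norm y * \<bar>ln (norm y)\<bar> powr \<alpha>) \<le> 1 / norm y"
    using y by (intro divide_left_mono) (auto intro!: mult_pos_pos)
  then show ?thesis using True y by (simp add: omega_plus_def)
qed

lemma omega_plus_le_inverse_norm:
  assumes "0 \<le> \<alpha>"
  shows "omega_plus \<alpha> y \<le> 1 / norm y"
proof -
  have "indicator (ball 0 (1/3)) y / norm y \<le> 1 / norm y"
    by (intro divide_right_mono) (auto simp: indicator_def)
  then show ?thesis using omega_plus_le[OF assms, of y] by linarith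
qed

lemma half_ball_sets [measurable]: "half_ball \<in> sets borel"
  unfolding half_ball_def by measurable

lemma perp_nth [simp]: "perp x $ 1 = - (x$2)" "perp x $ 2 = x$1"
  by (simp_all add: perp_def)

lemma norm_BS_kernel: "norm (BS_kernel v) = 1 / (2 * pi * norm v)"
proof -
  have "norm (perp v) = norm v" by (simp add: norm_vec_def L2_set_def sum_2 add.commute)
  then show ?thesis by (simp add: BS_kernel_def power2_eq_square)
qed

lemma BS_kernel_convolution_measurable [measurable]:
  "(\<lambda>y. omega_plus \<alpha> y *\<^sub>R BS_kernel (x - y)) \<in> borel_measurable lborel"
proof -
  have "linear perp" by (rule linearI) (simp_all add: vec_eq_iff forall_2)
  then have [measurable]: "perp \<in> borel_measurable borel"
    by (intro borel_measurable_continuous_onI linear_continuous_on linear_conv_bounded_linear[THEN iffD1])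
  show ?thesis unfolding omega_plus_def BS_kernel_def measurable_lborel1 by measurable
qed

lemma integrable_BS_kernel_convolution:
  assumes "0 \<le> \<alpha>" "x \<noteq> 0"
  shows "integrable lborel (\<lambda>y. omega_plus \<alpha> y *\<^sub>R BS_kernel (x - y))"
proof (rule integrableI_bounded)
  have "norm (omega_plus \<alpha> y *\<^sub>R BS_kernel (x - y)) \<le> indicator (ball 0 (1/3)) y / (norm y * norm (x - y))"
    for y
  proof -
    have "norm (omega_plus \<alpha> y *\<^sub>R BS_kernel (x - y)) = 1 / (2 * pi) * (omega_plus \<alpha> y / norm (x - y))"
      by (simp add: norm_BS_kernel omega_plus_nonneg)
    also have "\<dots> \<le> omega_plus \<alpha> y / norm (x - y)"
      using omega_plus_nonneg[of \<alpha> y] pi_gt3 by (intro mult_left_le_one_le) auto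
    also have "\<dots> \<le> indicator (ball 0 (1/3)) y / norm y / norm (x - y)"
      using omega_plus_le[OF assms(1)] by (intro divide_right_mono) auto
    finally show ?thesis by simp
  qed
  then have "(\<integral>\<^sup>+ y. norm (omega_plus \<alpha> y *\<^sub>R BS_kernel (x - y)) \<partial>lborel)
      \<le> (\<integral>\<^sup>+ y. ennreal (indicator (ball 0 (1/3)) y / (norm y * norm (x - y))) \<partial>lborel)"
    by (intro nn_integral_mono ennreal_leI)
  also have "\<dots> < \<infinity>"
    using nn_integral_inverse_norm_mult_le[of "1/3" x] assms(2) by (simp add: le_less_trans)
  finally show "(\<integral>\<^sup>+ y. norm (omega_plus \<alpha> y *\<^sub>R BS_kernel (x - y)) \<partial>lborel) < \<infinity>" .
qed (rule BS_kernel_convolution_measurable)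

section \<open>Dyadic boxes\<close>

definition dyadic_box :: "nat \<Rightarrow> (real^2) set" where
  "dyadic_box k = box (vector [0, 1/2^k]) (vector [1/2^k, 2/2^k])"

lemma mem_dyadic_box:
  "y \<in> dyadic_box k \<longleftrightarrow> 0 < y$1 \<and> y$1 < 1/2^k \<and> 1/2^k < y$2 \<and> y$2 < 2/2^k"
  by (simp add: dyadic_box_def mem_box_vector2)

lemma dyadic_box_sets [measurable]: "dyadic_box k \<in> sets borel"
  by (simp add: dyadic_box_def)

lemma emeasure_dyadic_box: "emeasure lborel (dyadic_box k) = ennreal (1 / 4^k)"
proof -
  have "(1/2^k) * (2/2^k - 1/2^k) = (1/4^k :: real)"
    by (simp add: power2_eq_square field_simps flip: power_mult_distrib)
  then show ?thesis unfolding dyadic_box_def by (subst emeasure_box_vector2) (auto simp: field_simps)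
qed

lemma dyadic_box_ne_empty: "vector [1 / 2^Suc k, 3 / 2^Suc k] \<in> dyadic_box k"
  by (simp add: mem_dyadic_box field_simps)

lemma dyadic_box_disjoint:
  assumes "y \<in> dyadic_box j" "y \<in> dyadic_box k"
  shows "j = k"
proof -
  have "\<not> (y \<in> dyadic_box j \<and> y \<in> dyadic_box k)" if "j < k" for j k
  proof -
    have "(2::real)^Suc j \<le> 2^k" using that by (intro power_increasing) auto
    then have "2/2^k \<le> (1::real)/2^j" by (simp add: field_simps)
    then show ?thesis by (auto simp: mem_dyadic_box)
  qed
  then show ?thesis using assms by (metis linorder_neqE_nat)
qed

lemma norm_dyadic_box:
  assumes "y \<in> dyadic_box k"
  shows "1/2^k < norm y" "(norm y)\<^sup>2 < 5 / 4^k" "norm y < 3 / 2^k"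
proof -
  have y: "0 < y$1" "y$1 < 1/2^k" "1/2^k < y$2" "y$2 < 2/2^k" using assms by (auto simp: mem_dyadic_box)
  show "1/2^k < norm y" using y component_le_norm_cart[of y 2] by linarith
  have "(y$1)\<^sup>2 < (1/2^k)\<^sup>2" "(y$2)\<^sup>2 < (2/2^k)\<^sup>2"
    using y by (auto intro!: power_strict_mono simp del: divide_le_0_iff)
  then show sq: "(norm y)\<^sup>2 < 5 / 4^k"
    by (simp add: norm_vec2_power2 power_divide power2_two_power add_divide_distrib[symmetric])
  also have "\<dots> < (3 / 2^k)\<^sup>2" by (simp add: power_divide power2_two_power divide_strict_right_mono)
  finally show "norm y < 3 / 2^k" by (rule power2_less_imp_less) simp
qed

lemma dyadic_box_subset_half_ball:
  assumes "3 \<le> k"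
  shows "dyadic_box k \<subseteq> half_ball"
proof
  fix y assume y: "y \<in> dyadic_box k"
  have "(4::real)^3 \<le> 4^k" using assms by (intro power_increasing) auto
  have "(norm y)\<^sup>2 < 5 / 4^k" using norm_dyadic_box(2)[OF y] .
  also have "\<dots> \<le> 5 / 4^3" using \<open>(4::real)^3 \<le> 4^k\<close> by (intro divide_left_mono) auto
  also have "\<dots> < (1/3)\<^sup>2" by (simp add: power2_eq_square)
  finally have "norm y < 1/3" by (rule power2_less_imp_less) simp
  moreover have "0 < y$2" using y by (auto simp: mem_dyadic_box intro: less_trans[rotated])
  ultimately show "y \<in> half_ball" by (simp add: half_ball_def)
qed

lemma omega_plus_ge_dyadic_box:
  assumes y: "y \<in> dyadic_box k" and k: "3 \<le> k" and \<alpha>: "0 \<le> \<alpha>"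
  shows "2^k / (3 * real k powr \<alpha>) \<le> omega_plus \<alpha> y"
proof -
  have hb: "y \<in> half_ball" using dyadic_box_subset_half_ball[OF k] y by blast
  have lower: "1/2^k < norm y" using norm_dyadic_box(1)[OF y] .
  have upper: "norm y < 3/2^k" using norm_dyadic_box(3)[OF y] .
  have n: "0 < norm y" "norm y < 1" using hb by (auto simp: half_ball_def norm_pos_half_ball)
  have "- ln (norm y) < real k * ln 2"
    using ln_less_cancel_iff[of "1/2^k" "norm y"] lower n by (simp add: ln_div ln_realpow)
  also have "\<dots> \<le> real k" using ln_2_less_1 by (simp add: mult_left_le)
  finally have "\<bar>ln (norm y)\<bar> powr \<alpha> \<le> real k powr \<alpha>"
    using n \<alpha> by (intro powr_mono2) auto
  then have le: "norm y * \<bar>ln (norm y)\<bar> powr \<alpha> \<le> (3/2^k) * real k powr \<alpha>"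
    using upper n by (intro mult_mono) auto
  have "0 < ((3/2^k) * real k powr \<alpha>) * (norm y * \<bar>ln (norm y)\<bar> powr \<alpha>)"
    using n k by (intro mult_pos_pos) auto
  then have "1 / ((3/2^k) * real k powr \<alpha>) \<le> 1 / (norm y * \<bar>ln (norm y)\<bar> powr \<alpha>)"
    by (intro divide_left_mono[OF le]) auto
  then show ?thesis using hb by (simp add: omega_plus_def)
qed

lemma nn_integral_ge_suminf_dyadic_boxes:
  assumes c: "\<And>k. 0 \<le> c k" and f: "\<And>k y. y \<in> dyadic_box k \<Longrightarrow> ennreal (c k) \<le> f y"
  shows "(\<Sum>k. ennreal (c k / 4^k)) \<le> (\<integral>\<^sup>+ y. f y \<partial>lborel)"
proof -
  have "(\<Sum>k. ennreal (c k) * indicator (dyadic_box k) y) \<le> f y" for y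
  proof (cases "\<exists>k. y \<in> dyadic_box k")
    case True
    then obtain k where k: "y \<in> dyadic_box k" by blast
    have "(\<Sum>j. ennreal (c j) * indicator (dyadic_box j) y) = (\<Sum>j\<in>{k}. ennreal (c j) * indicator (dyadic_box j) y)"
      by (rule suminf_finite) (use dyadic_box_disjoint[OF k] in \<open>auto simp: indicator_def\<close>)
    then show ?thesis using k f by simp
  qed simp
  then have "(\<integral>\<^sup>+ y. (\<Sum>k. ennreal (c k) * indicator (dyadic_box k) y) \<partial>lborel) \<le> (\<integral>\<^sup>+ y. f y \<partial>lborel)"
    by (rule nn_integral_mono)
  moreover have "(\<integral>\<^sup>+ y. (\<Sum>k. ennreal (c k) * indicator (dyadic_box k) y) \<partial>lborel)
      = (\<Sum>k. \<integral>\<^sup>+ y. ennreal (c k) * indicator (dyadic_box k) y \<partial>lborel)"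
    by (rule nn_integral_suminf) simp
  moreover have "(\<integral>\<^sup>+ y. ennreal (c k) * indicator (dyadic_box k) y \<partial>lborel) = ennreal (c k / 4^k)" for k
  proof -
    have "(\<integral>\<^sup>+ y. ennreal (c k) * indicator (dyadic_box k) y \<partial>lborel) = ennreal (c k) * ennreal (1 / 4^k)"
      by (subst nn_integral_cmult_indicator) (simp_all add: emeasure_dyadic_box)
    then show ?thesis using c ennreal_mult[of "c k" "1 / 4^k"] by simp
  qed
  ultimately show ?thesis by simp
qed

section \<open>The horizontal velocity on a dyadic box\<close>

definition u1_density :: "real \<Rightarrow> real^2 \<Rightarrow> real^2 \<Rightarrow> real" where
  "u1_density \<alpha> x y = omega_plus \<alpha> y * (y$2 - x$2) / (norm (x - y))\<^sup>2"

lemma u_plus_nth_1: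
  assumes "0 \<le> \<alpha>" "x \<noteq> 0"
  shows "integrable lborel (u1_density \<alpha> x)"
    and "2 * pi * u_plus \<alpha> x $ 1 = (LINT y|lborel. u1_density \<alpha> x y)"
proof -
  have kernel: "2 * pi * (omega_plus \<alpha> y *\<^sub>R BS_kernel (x - y)) $ 1 = u1_density \<alpha> x y" for y
    by (cases "x = y") (simp_all add: u1_density_def BS_kernel_def field_simps)
  have int: "integrable lborel (\<lambda>y. (omega_plus \<alpha> y *\<^sub>R BS_kernel (x - y)) $ 1)"
    using integrable_BS_kernel_convolution[OF assms] by (rule integrable_bounded_linear[OF bounded_linear_vec_nth])
  show "integrable lborel (u1_density \<alpha> x)"
    using integrable_mult_right[OF int, of "2 * pi"] by (simp only: kernel)
  have "u_plus \<alpha> x $ 1 = (LINT y|lborel. (omega_plus \<alpha> y *\<^sub>R BS_kernel (x - y)) $ 1)"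
    unfolding u_plus_def
    using integrable_BS_kernel_convolution[OF assms]
    by (rule integral_bounded_linear[OF bounded_linear_vec_nth, symmetric])
  then show "2 * pi * u_plus \<alpha> x $ 1 = (LINT y|lborel. u1_density \<alpha> x y)"
    by (simp flip: kernel)
qed

lemma u1_density_ge_dyadic_box:
  assumes x: "x \<in> dyadic_box k" and y: "y \<in> dyadic_box j" and j: "3 \<le> j" "j + 2 \<le> k"
    and \<alpha>: "0 \<le> \<alpha>"
  shows "4^j / (30 * real j powr \<alpha>) \<le> u1_density \<alpha> x y"
proof -
  define g :: real where "g = 1/2^j"
  define h :: real where "h = 1/2^k"
  have g: "0 < g" by (simp add: g_def)
  have "(2::real)^(j+2) \<le> 2^k" using j by (intro power_increasing) auto
  then have hg: "4 * h \<le> g" by (simp add: g_def h_def power_add field_simps)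
  have xx: "0 < x$1" "x$1 < h" "h < x$2" "x$2 < 2*h" using x by (auto simp: mem_dyadic_box h_def)
  have yy: "0 < y$1" "y$1 < g" "g < y$2" "y$2 < 2*g" using y by (auto simp: mem_dyadic_box g_def)
  have num: "g/2 \<le> y$2 - x$2" using xx yy hg by linarith
  have "\<bar>(x - y)$1\<bar> < g" "\<bar>(x - y)$2\<bar> < 2*g" using xx yy hg by auto
  then have "\<bar>(x - y)$1\<bar>\<^sup>2 < g\<^sup>2" "\<bar>(x - y)$2\<bar>\<^sup>2 < (2*g)\<^sup>2"
    by (simp_all only: power_strict_mono abs_ge_zero zero_less_numeral)
  then have den: "(norm (x - y))\<^sup>2 \<le> 5 * g\<^sup>2" unfolding norm_vec2_power2 power2_abs by simp
  have "0 < (norm (x - y))\<^sup>2" using num g by auto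
  then have ratio: "(g/2) / (5 * g\<^sup>2) \<le> (y$2 - x$2) / (norm (x - y))\<^sup>2"
    using num den g by (intro frac_le) auto
  have "1 / (3 * g * real j powr \<alpha>) \<le> omega_plus \<alpha> y"
    using omega_plus_ge_dyadic_box[OF y j(1) \<alpha>] by (simp add: g_def)
  then have "1 / (3 * g * real j powr \<alpha>) * ((g/2) / (5 * g\<^sup>2))
      \<le> omega_plus \<alpha> y * ((y$2 - x$2) / (norm (x - y))\<^sup>2)"
    using ratio g by (intro mult_mono) (auto simp: omega_plus_nonneg)
  also have "\<dots> = u1_density \<alpha> x y" by (simp add: u1_density_def)
  finally have "1 / (3 * g * real j powr \<alpha>) * ((g/2) / (5 * g\<^sup>2)) \<le> u1_density \<alpha> x y" .
  moreover have "1 / (3 * g * real j powr \<alpha>) * ((g/2) / (5 * g\<^sup>2)) = 4^j / (30 * real j powr \<alpha>)"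
  proof -
    define p :: real where "p = 2^j"
    have "0 < p" "4^j = p\<^sup>2" by (simp_all add: p_def power2_two_power)
    then show ?thesis by (simp add: g_def p_def[symmetric] power2_eq_square field_simps)
  qed
  ultimately show ?thesis by simp
qed

lemma neg_u1_density: "- u1_density \<alpha> x y = omega_plus \<alpha> y * (x$2 - y$2) / (norm (x - y))\<^sup>2"
  by (simp add: u1_density_def minus_divide_left right_diff_distrib)

lemma u1_density_neg_le_inverse_norm_mult:
  assumes "0 \<le> \<alpha>"
  shows "- u1_density \<alpha> x y \<le> 1 / (norm y * norm (x - y))"
proof (cases "x = y")
  case False
  then have n: "0 < norm (x - y)" by simp
  have "x$2 - y$2 \<le> norm (x - y)" using component_le_norm_cart[of "x - y" 2] by simp
  then have "- u1_density \<alpha> x y \<le> omega_plus \<alpha> y * norm (x - y) / (norm (x - y))\<^sup>2"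
    unfolding neg_u1_density by (intro divide_right_mono mult_left_mono) (simp_all add: omega_plus_nonneg)
  also have "\<dots> = omega_plus \<alpha> y / norm (x - y)" using n by (simp add: power2_eq_square)
  also have "\<dots> \<le> 1 / norm y / norm (x - y)"
    using omega_plus_le_inverse_norm[OF assms, of y] n by (intro divide_right_mono) auto
  finally show ?thesis by simp
qed (simp add: u1_density_def)

lemma u1_density_neg_le_far:
  assumes \<alpha>: "0 \<le> \<alpha>" and x: "\<bar>x$1\<bar> < h" "x$2 < 2*h" and y: "4*h < \<bar>y$1\<bar>"
  shows "- u1_density \<alpha> x y \<le> 4 * h / \<bar>y$1\<bar>^3"
proof (cases "y \<in> half_ball")
  case True
  define t where "t = \<bar>y$1\<bar>"
  have h: "0 < h" and t: "4*h < t" using x y by (auto simp: t_def)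
  have "t - h \<le> \<bar>(x - y)$1\<bar>" using x by (auto simp: t_def)
  also have "\<dots> \<le> norm (x - y)" by (rule component_le_norm_cart)
  finally have "(3/4 * t)\<^sup>2 \<le> (norm (x - y))\<^sup>2" using t h by (intro power_mono) auto
  moreover have "t\<^sup>2 / 2 \<le> (3/4 * t)\<^sup>2" by (simp add: power2_eq_square)
  ultimately have den: "t\<^sup>2 / 2 \<le> (norm (x - y))\<^sup>2" by linarith
  have "omega_plus \<alpha> y \<le> 1 / norm y" using omega_plus_le_inverse_norm[OF \<alpha>] .
  also have "\<dots> \<le> 1 / t"
  proof (rule divide_left_mono)
    show "t \<le> norm y" using component_le_norm_cart[of y 1] by (simp add: t_def)
    then show "0 < norm y * t" using t h by (intro mult_pos_pos) auto
  qed simp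
  finally have om: "omega_plus \<alpha> y \<le> 1 / t" .
  have "x$2 - y$2 \<le> 2*h" using x True by (auto simp: half_ball_def)
  then have "omega_plus \<alpha> y * (x$2 - y$2) \<le> omega_plus \<alpha> y * (2*h)"
    by (intro mult_left_mono) (simp_all add: omega_plus_nonneg)
  also have "\<dots> \<le> (1 / t) * (2*h)" using om h by (intro mult_right_mono) auto
  finally have "omega_plus \<alpha> y * (x$2 - y$2) / (norm (x - y))\<^sup>2 \<le> (1 / t) * (2*h) / (t\<^sup>2 / 2)"
    using t den h by (intro frac_le) auto
  also have "\<dots> = 4 * h / t^3" using t h by (simp add: power2_eq_square power3_eq_cube)
  finally show ?thesis by (simp add: neg_u1_density t_def)
qed (use x y in \<open>simp add: u1_density_def omega_plus_eq_0\<close>)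

lemma u1_density_neg_le:
  assumes x: "x \<in> dyadic_box k" and \<alpha>: "0 \<le> \<alpha>"
  defines "h \<equiv> 1/2^k"
  shows "- u1_density \<alpha> x y \<le> indicator (ball 0 (6*h)) y / (norm y * norm (x - y))
           + 4 * h * (indicator {y::real^2. 4*h < \<bar>y$1\<bar> \<and> 0 < y$2 \<and> y$2 < 2*h} y / \<bar>y$1\<bar>^3)"
    (is "_ \<le> ?near + 4 * h * ?far")
proof -
  have h: "0 < h" by (simp add: h_def)
  have xx: "0 < x$1" "x$1 < h" "h < x$2" "x$2 < 2*h" using x by (auto simp: mem_dyadic_box h_def)
  have near_nonneg: "0 \<le> ?near" and far_nonneg: "0 \<le> 4 * h * ?far" using h by simp_all
  show ?thesis
  proof (cases "y \<in> half_ball \<and> y$2 < x$2")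
    case False
    then have "0 \<le> u1_density \<alpha> x y"
      by (cases "y \<in> half_ball") (auto simp: u1_density_def omega_plus_nonneg omega_plus_eq_0)
    then show ?thesis using near_nonneg far_nonneg by linarith
  next
    case True
    then have y: "0 < y$2" "y$2 < x$2" by (auto simp: half_ball_def)
    show ?thesis
    proof (cases "\<bar>y$1\<bar> \<le> 4*h")
      case True
      have "norm y \<le> \<bar>y$1\<bar> + \<bar>y$2\<bar>" using norm_le_l1_cart[of y] by (simp add: sum_2)
      then have "y \<in> ball 0 (6*h)" using True y xx by simp
      then show ?thesis using u1_density_neg_le_inverse_norm_mult[OF \<alpha>, of x y] far_nonneg by simp
    next
      case False
      then have "- u1_density \<alpha> x y \<le> 4 * h / \<bar>y$1\<bar>^3"
        using xx by (intro u1_density_neg_le_far[OF \<alpha>]) auto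
      moreover have "4 * h * ?far = 4 * h / \<bar>y$1\<bar>^3" using False y xx by simp
      ultimately show ?thesis using near_nonneg by linarith
    qed
  qed
qed

lemma nn_integral_u1_density_neg_le:
  assumes x: "x \<in> dyadic_box k" and \<alpha>: "0 \<le> \<alpha>"
  shows "(\<integral>\<^sup>+ y. ennreal (- u1_density \<alpha> x y) \<partial>lborel) \<le> ennreal 214"
proof -
  define h :: real where "h = 1/2^k"
  define near where "near y = indicator (ball 0 (6*h)) y / (norm y * norm (x - y))" for y :: "real^2"
  define far where "far y = indicator {y::real^2. 4*h < \<bar>y$1\<bar> \<and> 0 < y$2 \<and> y$2 < 2*h} y / \<bar>y$1\<bar>^3"
    for y :: "real^2"
  have h: "0 < h" by (simp add: h_def)
  have nx: "h < norm x" using norm_dyadic_box(1)[OF x] by (simp add: h_def)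
  have [measurable]: "(\<lambda>y. ennreal (near y)) \<in> borel_measurable lborel"
    unfolding near_def by (measurable; simp add: borel_open)
  have [measurable]: "(\<lambda>y. ennreal (far y)) \<in> borel_measurable lborel"
    unfolding far_def by measurable
  have "(\<integral>\<^sup>+ y. near y \<partial>lborel) \<le> ennreal (16 * (2 * (6*h) + norm x) / norm x)"
    unfolding near_def using h nx by (intro nn_integral_inverse_norm_mult_le) auto
  also have "16 * (2 * (6*h) + norm x) / norm x \<le> 208"
    using h nx by (subst pos_divide_le_eq) auto
  finally have near_int: "(\<integral>\<^sup>+ y. near y \<partial>lborel) \<le> ennreal 208" by (simp add: ennreal_leI order_trans)
  have "(\<integral>\<^sup>+ y. far y \<partial>lborel) \<le> ennreal (32 * (2*h) / (3 * (4*h)\<^sup>2))"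
    unfolding far_def using h by (intro nn_integral_strip_inverse_cube_le) auto
  also have "32 * (2*h) / (3 * (4*h)\<^sup>2) = 4 / (3*h)"
    using h by (simp add: power2_eq_square field_simps)
  finally have far_int: "(\<integral>\<^sup>+ y. far y \<partial>lborel) \<le> ennreal (4 / (3*h))" .
  have "(\<integral>\<^sup>+ y. ennreal (- u1_density \<alpha> x y) \<partial>lborel)
      \<le> (\<integral>\<^sup>+ y. ennreal (near y) + ennreal (4*h) * ennreal (far y) \<partial>lborel)"
  proof (rule nn_integral_mono)
    fix y
    have "0 \<le> near y" "0 \<le> far y" by (simp_all add: near_def far_def)
    then show "ennreal (- u1_density \<alpha> x y) \<le> ennreal (near y) + ennreal (4*h) * ennreal (far y)"
      using u1_density_neg_le[OF x \<alpha>, of y] h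
      by (simp add: near_def far_def h_def ennreal_leI flip: ennreal_plus ennreal_mult)
  qed
  also have "\<dots> = (\<integral>\<^sup>+ y. near y \<partial>lborel) + ennreal (4*h) * (\<integral>\<^sup>+ y. far y \<partial>lborel)"
    by (simp add: nn_integral_add nn_integral_cmult)
  also have "\<dots> \<le> ennreal 208 + ennreal (4*h) * ennreal (4 / (3*h))"
    by (intro add_mono mult_left_mono near_int far_int) simp_all
  also have "ennreal (4*h) * ennreal (4 / (3*h)) = ennreal (16/3)"
    using h by (subst ennreal_mult[symmetric]) auto
  also have "ennreal 208 + ennreal (16/3) = ennreal (208 + 16/3)"
    by (rule ennreal_plus[symmetric]) auto
  also have "\<dots> \<le> ennreal 214" by (intro ennreal_leI) simp
  finally show ?thesis .
qed

lemma nn_integral_u1_density_ge: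
  assumes x: "x \<in> dyadic_box k" and \<alpha>: "0 \<le> \<alpha>"
  shows "ennreal ((\<Sum>j=3..k-2. 1 / real j powr \<alpha>) / 30) \<le> (\<integral>\<^sup>+ y. ennreal (u1_density \<alpha> x y) \<partial>lborel)"
proof -
  define c where "c j = (if j \<in> {3..k-2} then 4^j / (30 * real j powr \<alpha>) else 0)" for j :: nat
  have "(\<Sum>j. ennreal (c j / 4^j)) \<le> (\<integral>\<^sup>+ y. ennreal (u1_density \<alpha> x y) \<partial>lborel)"
  proof (rule nn_integral_ge_suminf_dyadic_boxes)
    fix j y assume "y \<in> dyadic_box j"
    then show "ennreal (c j) \<le> ennreal (u1_density \<alpha> x y)"
      using u1_density_ge_dyadic_box[OF x _ _ _ \<alpha>] by (auto simp: c_def intro!: ennreal_leI)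
  qed (simp add: c_def)
  moreover have "(\<Sum>j. ennreal (c j / 4^j)) = ennreal ((\<Sum>j=3..k-2. 1 / real j powr \<alpha>) / 30)"
  proof -
    have "(\<Sum>j. ennreal (c j / 4^j)) = (\<Sum>j\<in>{3..k-2}. ennreal (c j / 4^j))"
      by (rule suminf_finite) (auto simp: c_def)
    also have "\<dots> = ennreal (\<Sum>j\<in>{3..k-2}. 1 / (30 * real j powr \<alpha>))"
      by (subst sum_ennreal) (auto simp: c_def intro!: sum.cong)
    finally show ?thesis by (simp add: sum_divide_distrib mult.commute)
  qed
  ultimately show ?thesis by simp
qed

lemma integral_ge_of_nn_integral_bounds:
  fixes f :: "'a \<Rightarrow> real"
  assumes f: "integrable M f" and ab: "0 \<le> a" "0 \<le> b"
    and pos: "ennreal a \<le> (\<integral>\<^sup>+ x. f x \<partial>M)" and neg: "(\<integral>\<^sup>+ x. ennreal (- f x) \<partial>M) \<le> ennreal b"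
  shows "a - b \<le> integral\<^sup>L M f"
proof -
  have "(\<integral>\<^sup>+ x. f x \<partial>M) \<noteq> \<infinity>" using f by (auto simp: real_integrable_def)
  then have "a \<le> enn2real (\<integral>\<^sup>+ x. f x \<partial>M)"
    using enn2real_mono[OF pos] ab by (simp add: less_top)
  moreover have "enn2real (\<integral>\<^sup>+ x. ennreal (- f x) \<partial>M) \<le> b"
    using enn2real_mono[OF neg] ab by simp
  ultimately show ?thesis by (simp add: real_lebesgue_integral_def[OF f])
qed

lemma u_plus_nth_1_ge:
  assumes x: "x \<in> dyadic_box k" and \<alpha>: "0 \<le> \<alpha>"
  shows "(\<Sum>j=3..k-2. 1 / real j powr \<alpha>) / 30 - 214 \<le> 2 * pi * u_plus \<alpha> x $ 1"
proof -
  have "x \<noteq> 0" using norm_dyadic_box(1)[OF x] by auto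
  then show ?thesis
    using integral_ge_of_nn_integral_bounds[OF u_plus_nth_1(1) _ _ nn_integral_u1_density_ge[OF x \<alpha>]
        nn_integral_u1_density_neg_le[OF x \<alpha>]] u_plus_nth_1(2) \<alpha>
    by (simp add: sum_nonneg)
qed

lemma sum_inverse_powr_ge:
  assumes k: "4 \<le> k" and \<alpha>: "0 \<le> \<alpha>"
  shows "real k powr (1 - \<alpha>) - 4 \<le> (\<Sum>j=3..k-2. 1 / real j powr \<alpha>)"
proof -
  have kp: "1 \<le> real k powr \<alpha>" using k \<alpha> by (intro ge_one_powr_ge_zero) auto
  have "(\<Sum>j=3..k-2. 1 / real k powr \<alpha>) \<le> (\<Sum>j=3..k-2. 1 / real j powr \<alpha>)"
    using \<alpha> by (intro sum_mono divide_left_mono powr_mono2) auto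
  moreover have "(\<Sum>j=3..k-2. 1 / real k powr \<alpha>) = (real k - 4) / real k powr \<alpha>"
    using k by simp
  moreover have "real k powr (1 - \<alpha>) - 4 \<le> (real k - 4) / real k powr \<alpha>"
  proof -
    have "real k powr (1 - \<alpha>) - 4 = (real k - 4 * real k powr \<alpha>) / real k powr \<alpha>"
      using k kp by (simp add: powr_diff field_simps)
    also have "\<dots> \<le> (real k - 4) / real k powr \<alpha>" using kp by (intro divide_right_mono) auto
    finally show ?thesis .
  qed
  ultimately show ?thesis by linarith
qed

section \<open>Unboundedness of the velocity and non-integrability\<close>

lemma filterlim_real_powr_sequentially:
  assumes "0 < p"
  shows "filterlim (\<lambda>k. real k powr p) at_top sequentially"
proof -
  have "((\<lambda>k. real k powr (- p)) \<longlongrightarrow> 0) sequentially"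
    using assms by (intro tendsto_neg_powr filterlim_real_sequentially) auto
  then have "filterlim (\<lambda>k. inverse (real k powr (- p))) at_top sequentially"
    by (rule filterlim_inverse_at_top) (simp add: eventually_at_top_linorder exI[of _ 1])
  then show ?thesis by (simp add: powr_minus)
qed

lemma eventually_u_plus_nth_1_ge:
  assumes "0 \<le> \<alpha>" "\<alpha> < 1"
  shows "\<forall>\<^sub>F k in sequentially. \<forall>x\<in>dyadic_box k. real k powr (1 - \<alpha>) / (120 * pi) \<le> u_plus \<alpha> x $ 1"
proof -
  \<comment> \<open>\<open>12848 = 60 * 214 + 8\<close> is where \<open>(p - 4) / 30 - 214 \<ge> p / 60\<close> starts to hold.\<close>
  have "\<forall>\<^sub>F k in sequentially. 12848 \<le> real k powr (1 - \<alpha>)"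
    using filterlim_real_powr_sequentially[of "1 - \<alpha>"] assms by (simp add: filterlim_at_top)
  then show ?thesis
  proof (rule eventually_mono[OF eventually_conj[OF _ eventually_ge_at_top[of 4]]], intro ballI)
    fix k x assume k: "12848 \<le> real k powr (1 - \<alpha>) \<and> 4 \<le> k" and x: "x \<in> dyadic_box k"
    have "real k powr (1 - \<alpha>) / 60 \<le> (real k powr (1 - \<alpha>) - 4) / 30 - 214"
      using k by (simp add: field_simps)
    also have "\<dots> \<le> (\<Sum>j=3..k-2. 1 / real j powr \<alpha>) / 30 - 214"
      using sum_inverse_powr_ge[of k \<alpha>] assms(1) k by (simp add: divide_right_mono)
    also have "\<dots> \<le> 2 * pi * u_plus \<alpha> x $ 1"
      using u_plus_nth_1_ge[OF x assms(1)] .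
    finally show "real k powr (1 - \<alpha>) / (120 * pi) \<le> u_plus \<alpha> x $ 1"
      by (simp add: field_simps)
  qed
qed

lemma u_plus_unbounded:
  assumes "0 \<le> \<alpha>" "\<alpha> < 1"
  shows "\<exists>x. integrable lborel (\<lambda>y. omega_plus \<alpha> y *\<^sub>R BS_kernel (x - y)) \<and> M < norm (u_plus \<alpha> x)"
proof -
  have "\<forall>\<^sub>F k in sequentially. M < real k powr (1 - \<alpha>) / (120 * pi)"
    using filterlim_real_powr_sequentially[of "1 - \<alpha>"] assms
    by (simp add: filterlim_at_top_dense pos_less_divide_eq)
  then have "\<forall>\<^sub>F k in sequentially. \<forall>x\<in>dyadic_box k. M < u_plus \<alpha> x $ 1"
    using eventually_u_plus_nth_1_ge[OF assms] by eventually_elim (use order_less_le_trans in blast)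
  then obtain k where k: "\<forall>x\<in>dyadic_box k. M < u_plus \<alpha> x $ 1"
    using eventually_happens'[OF trivial_limit_sequentially] by blast
  define x :: "real^2" where "x = vector [1 / 2^Suc k, 3 / 2^Suc k]"
  have x: "x \<in> dyadic_box k" unfolding x_def by (rule dyadic_box_ne_empty)
  then have "x \<noteq> 0" using norm_dyadic_box(1)[OF x] by auto
  moreover have "M < norm (u_plus \<alpha> x)"
    using k x component_le_norm_cart[of "u_plus \<alpha> x" 1] by fastforce
  ultimately show ?thesis using integrable_BS_kernel_convolution assms(1) by blast
qed

lemma eventually_omega_plus_sq_u_plus_ge:
  assumes \<alpha>: "0 \<le> \<alpha>" "\<alpha> \<le> 2/3"
  shows "\<forall>\<^sub>F k in sequentially. \<forall>x\<in>dyadic_box k.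
           4^k / (1080 * pi * real k) \<le> (omega_plus \<alpha> x)\<^sup>2 * norm (u_plus \<alpha> x)"
proof -
  have "\<alpha> < 1" using \<alpha> by simp
  show ?thesis
    using eventually_conj[OF eventually_u_plus_nth_1_ge[OF \<alpha>(1) \<open>\<alpha> < 1\<close>] eventually_ge_at_top[of 3]]
  proof (rule eventually_mono, safe)
    fix k x assume k: "3 \<le> k" and x: "x \<in> dyadic_box k"
      and u: "\<forall>x\<in>dyadic_box k. real k powr (1 - \<alpha>) / (120 * pi) \<le> u_plus \<alpha> x $ 1"
    define w where "w = 2^k / (3 * real k powr \<alpha>)"
    define v where "v = real k powr (1 - \<alpha>) / (120 * pi)"
    have "w\<^sup>2 \<le> (omega_plus \<alpha> x)\<^sup>2"
      using omega_plus_ge_dyadic_box[OF x k \<alpha>(1)] by (simp add: w_def power_mono)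
    moreover have "v \<le> norm (u_plus \<alpha> x)"
      using u x component_le_norm_cart[of "u_plus \<alpha> x" 1] by (auto simp: v_def)
    ultimately have "w\<^sup>2 * v \<le> (omega_plus \<alpha> x)\<^sup>2 * norm (u_plus \<alpha> x)"
      by (intro mult_mono) (auto simp: v_def)
    moreover have "w\<^sup>2 * v = 4^k * real k powr (1 - 3 * \<alpha>) / (1080 * pi)"
    proof -
      have "real k powr (1 - \<alpha>) / (real k powr \<alpha>)\<^sup>2 = real k powr (1 - 3 * \<alpha>)"
        using k by (simp add: power2_eq_square powr_diff flip: powr_add)
      then show ?thesis
        using k by (simp add: w_def v_def power_divide power2_two_power field_simps)
    qed
    moreover have "4^k / (1080 * pi * real k) \<le> 4^k * real k powr (1 - 3 * \<alpha>) / (1080 * pi)"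
    proof -
      have "real k powr (-1) \<le> real k powr (1 - 3 * \<alpha>)" using k \<alpha> by (intro powr_mono) auto
      then show ?thesis using k by (simp add: powr_minus divide_right_mono field_simps)
    qed
    ultimately show "4^k / (1080 * pi * real k) \<le> (omega_plus \<alpha> x)\<^sup>2 * norm (u_plus \<alpha> x)"
      by linarith
  qed
qed

lemma not_summable_harmonic_tail:
  assumes "c \<noteq> 0"
  shows "\<not> summable (\<lambda>k. if K \<le> k then c / real k else 0)"
proof
  assume "summable (\<lambda>k. if K \<le> k then c / real k else 0)"
  moreover have "\<forall>\<^sub>F k in sequentially. (if K \<le> k then c / real k else 0) = c * inverse (real k)"
    using eventually_ge_at_top[of K] by eventually_elim (simp add: divide_inverse)
  ultimately have "summable (\<lambda>k. c * inverse (real k))" by (simp add: summable_cong)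
  then show False using assms not_summable_harmonic[where 'a=real] by (simp add: summable_cmult_iff)
qed

lemma not_set_integrable_omega_plus_sq_u_plus:
  assumes \<alpha>: "0 \<le> \<alpha>" "\<alpha> \<le> 2/3"
  shows "\<not> set_integrable lborel (cball 0 1) (\<lambda>x. (\<bar>omega_plus \<alpha> x\<bar>)\<^sup>2 *\<^sub>R u_plus \<alpha> x)"
proof
  define f where "f x = indicator (cball 0 1) x *\<^sub>R ((\<bar>omega_plus \<alpha> x\<bar>)\<^sup>2 *\<^sub>R u_plus \<alpha> x)" for x
  assume "set_integrable lborel (cball 0 1) (\<lambda>x. (\<bar>omega_plus \<alpha> x\<bar>)\<^sup>2 *\<^sub>R u_plus \<alpha> x)"
  then have finite: "(\<integral>\<^sup>+ x. norm (f x) \<partial>lborel) < \<infinity>"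
    by (simp add: set_integrable_def integrable_iff_bounded f_def)
  obtain K where K: "\<And>k x. K \<le> k \<Longrightarrow> x \<in> dyadic_box k
      \<Longrightarrow> 2 \<le> k \<and> 4^k / (1080 * pi * real k) \<le> (omega_plus \<alpha> x)\<^sup>2 * norm (u_plus \<alpha> x)"
    using eventually_conj[OF eventually_ge_at_top[of 2] eventually_omega_plus_sq_u_plus_ge[OF \<alpha>]]
    by (auto simp: eventually_sequentially)
  define c where "c k = (if K \<le> k then 4^k / (1080 * pi * real k) else 0)" for k :: nat
  have "(\<Sum>k. ennreal (c k / 4^k)) \<le> (\<integral>\<^sup>+ x. norm (f x) \<partial>lborel)"
  proof (rule nn_integral_ge_suminf_dyadic_boxes)
    fix k x assume x: "x \<in> dyadic_box k"
    show "ennreal (c k) \<le> ennreal (norm (f x))"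
    proof (cases "K \<le> k")
      case True
      then have "2 \<le> k" using K x by blast
      then have "3 / 2^k \<le> (3 / 2^2 :: real)" by (intro divide_left_mono power_increasing) auto
      then have "x \<in> cball 0 1" using norm_dyadic_box(3)[OF x] by simp
      then show ?thesis using K[OF True x] True by (auto simp: c_def f_def intro!: ennreal_leI)
    qed (simp add: c_def)
  qed (simp add: c_def)
  also have "\<dots> < \<infinity>" by (rule finite)
  finally have "summable (\<lambda>k. c k / 4^k)" by (intro summable_suminf_not_top) (auto simp: c_def)
  moreover have "(\<lambda>k. c k / 4^k) = (\<lambda>k. if K \<le> k then 1 / (1080 * pi) / real k else 0)"
    by (auto simp: c_def fun_eq_iff)
  ultimately show False using not_summable_harmonic_tail[of "1 / (1080 * pi)" K] by simp
qed

theorem theorem5p3: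
  fixes \<alpha> :: real
  assumes "1/2 < \<alpha>" and "\<alpha> < 1"
  shows "(\<forall>M::real. \<exists>x. integrable lborel (\<lambda>y. omega_plus \<alpha> y *\<^sub>R BS_kernel (x - y))
                        \<and> norm (u_plus \<alpha> x) > M)
     \<and> (\<alpha> \<le> 2/3 \<longrightarrow>
          (\<exists>C. compact C \<and>
               \<not> set_integrable lborel C (\<lambda>x. (\<bar>omega_plus \<alpha> x\<bar>)\<^sup>2 *\<^sub>R u_plus \<alpha> x)))"
proof -
  have \<alpha>: "0 \<le> \<alpha>" using assms(1) by simp
  show ?thesis
  proof (intro conjI allI impI)
    fix M :: real
    show "\<exists>x. integrable lborel (\<lambda>y. omega_plus \<alpha> y *\<^sub>R BS_kernel (x - y)) \<and> norm (u_plus \<alpha> x) > M"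
      using u_plus_unbounded[OF \<alpha> assms(2)] by blast
  next
    assume "\<alpha> \<le> 2/3"
    show "\<exists>C. compact C \<and> \<not> set_integrable lborel C (\<lambda>x. (\<bar>omega_plus \<alpha> x\<bar>)\<^sup>2 *\<^sub>R u_plus \<alpha> x)"
      using not_set_integrable_omega_plus_sq_u_plus[OF \<alpha> \<open>\<alpha> \<le> 2/3\<close>] compact_cball by blast
  qed
qed

end
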